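(* Let $w$ be a Coxeter element of an irreducible euclidean Coxeter group $W$ acting on the euclidean space $E$ with vector space of translations $V$. Then $w$ is a hyperbolic isometry of $E$, its move-set is a nonlinear affine hyperplane in $V$, and its min-set is a line in $E$. Moreover, any factorization of $w$ as the product of the elements of a simple system is a minimum length reflection factorization of $w$.
   Context: $W$ is generated by the reflections of an $n$-dimensional euclidean space $E$ in the facets of a euclidean $n$-simplex with dihedral angles submultiples of $\pi$, acting properly and cocompactly; a simple system is the set of reflections in the facets of a chamber (image of the simplex), and a Coxeter element is the product of the elements of a simple system in some order. For an isometry $u$ of $E$: its move-set $\mathrm{Mov}(u)\subset V$ is the set of vectors $\lambda$ with $u(x)=x+\lambda$ for some $x\in E$ (an affine subspace of $V$); $u$ is hyperbolic if it has no fixed points (equivalently $\mathrm{Mov}(u)$ does not contain $0$, i.e. is a nonlinear affine subspace); its min-set $\mathrm{Min}(u)$ is the set of points moved by the shortest vector in $\mathrm{Mov}(u)$. Reflection length refers to factorization into reflections of $E$. *)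

theory Defs
  imports "HOL-Analysis.Analysis"
begin

text \<open>Euclidean space E is modelled by a type 'a of class euclidean_space; its
  vector space of translations V is the same type, n = DIM('a).\<close>

definition refl_in :: "'a::euclidean_space set \<Rightarrow> 'a \<Rightarrow> 'a" where
  "refl_in H x = 2 *\<^sub>R closest_point H x - x"

definition affine_hyperplane :: "'a::euclidean_space set \<Rightarrow> bool" where
  "affine_hyperplane H \<longleftrightarrow> affine H \<and> aff_dim H = int DIM('a) - 1"

definition is_reflection :: "('a::euclidean_space \<Rightarrow> 'a) \<Rightarrow> bool" where
  "is_reflection r \<longleftrightarrow> (\<exists>H. affine_hyperplane H \<and> r = refl_in H)"

text \<open>Product of a list of maps (leftmost factor applied last).\<close>
definition prod_maps :: "('a \<Rightarrow> 'a) list \<Rightarrow> 'a \<Rightarrow> 'a" where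
  "prod_maps fs = foldr (\<circ>) fs id"

definition is_simplex :: "(nat \<Rightarrow> 'a::euclidean_space) \<Rightarrow> bool" where
  "is_simplex v \<longleftrightarrow> inj_on v {..DIM('a)} \<and> \<not> affine_dependent (v ` {..DIM('a)})"

definition simplex_set :: "(nat \<Rightarrow> 'a::euclidean_space) \<Rightarrow> 'a set" where
  "simplex_set v = convex hull (v ` {..DIM('a)})"

definition facet :: "(nat \<Rightarrow> 'a::euclidean_space) \<Rightarrow> nat \<Rightarrow> 'a set" where
  "facet v i = convex hull (v ` ({..DIM('a)} - {i}))"

definition facet_hyperplane :: "(nat \<Rightarrow> 'a::euclidean_space) \<Rightarrow> nat \<Rightarrow> 'a set" where
  "facet_hyperplane v i = affine hull (facet v i)"

definition inward_normal :: "(nat \<Rightarrow> 'a::euclidean_space) \<Rightarrow> nat \<Rightarrow> 'a" where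
  "inward_normal v i = sgn (v i - closest_point (facet_hyperplane v i) (v i))"

definition dihedral_angle :: "(nat \<Rightarrow> 'a::euclidean_space) \<Rightarrow> nat \<Rightarrow> nat \<Rightarrow> real" where
  "dihedral_angle v i j = arccos (- (inward_normal v i \<bullet> inward_normal v j))"

text \<open>All dihedral angles are submultiples of pi (only meaningful for n >= 2;
  for n = 1 there are no dihedral angles).\<close>
definition angles_submultiples_of_pi :: "(nat \<Rightarrow> 'a::euclidean_space) \<Rightarrow> bool" where
  "angles_submultiples_of_pi v \<longleftrightarrow>
     (\<forall>i\<le>DIM('a). \<forall>j\<le>DIM('a). i \<noteq> j \<longrightarrow> DIM('a) \<ge> 2 \<longrightarrow>
        (\<exists>m::nat. m \<ge> 2 \<and> dihedral_angle v i j = pi / real m))"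

text \<open>The group W generated by the reflections in the facets of the simplex
  (reflections are involutions, so the generated monoid is the generated group).\<close>
inductive_set refl_group :: "(nat \<Rightarrow> 'a::euclidean_space) \<Rightarrow> ('a \<Rightarrow> 'a) set"
  for v :: "nat \<Rightarrow> 'a" where
  id_in: "id \<in> refl_group v"
| step: "i \<le> DIM('a) \<Longrightarrow> g \<in> refl_group v \<Longrightarrow> refl_in (facet_hyperplane v i) \<circ> g \<in> refl_group v"

definition acts_properly :: "('a::euclidean_space \<Rightarrow> 'a) set \<Rightarrow> bool" where
  "acts_properly W \<longleftrightarrow> (\<forall>K. compact K \<longrightarrow> finite {g \<in> W. g ` K \<inter> K \<noteq> {}})"

definition acts_cocompactly :: "('a::euclidean_space \<Rightarrow> 'a) set \<Rightarrow> bool" where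
  "acts_cocompactly W \<longleftrightarrow> (\<exists>K. compact K \<and> (\<Union>g\<in>W. g ` K) = UNIV)"

text \<open>Simple system of the chamber g(simplex), g \<in> W: the reflections in its
  facets g(facet i).\<close>
definition simple_refl :: "(nat \<Rightarrow> 'a::euclidean_space) \<Rightarrow> ('a \<Rightarrow> 'a) \<Rightarrow> nat \<Rightarrow> 'a \<Rightarrow> 'a" where
  "simple_refl v g i = refl_in (affine hull (g ` facet v i))"

definition simple_factorization ::
  "(nat \<Rightarrow> 'a::euclidean_space) \<Rightarrow> ('a \<Rightarrow> 'a) \<Rightarrow> ('a \<Rightarrow> 'a) \<Rightarrow> nat list \<Rightarrow> bool" where
  "simple_factorization v w g \<sigma> \<longleftrightarrow>
     g \<in> refl_group v \<and> distinct \<sigma> \<and> set \<sigma> = {..DIM('a)} \<and>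
     w = prod_maps (map (simple_refl v g) \<sigma>)"

definition coxeter_element :: "(nat \<Rightarrow> 'a::euclidean_space) \<Rightarrow> ('a \<Rightarrow> 'a) \<Rightarrow> bool" where
  "coxeter_element v w \<longleftrightarrow> (\<exists>g \<sigma>. simple_factorization v w g \<sigma>)"

definition Mov :: "('a::euclidean_space \<Rightarrow> 'a) \<Rightarrow> 'a set" where
  "Mov u = {d. \<exists>x. u x = x + d}"

definition hyperbolic :: "('a::euclidean_space \<Rightarrow> 'a) \<Rightarrow> bool" where
  "hyperbolic u \<longleftrightarrow> (\<forall>x. u x \<noteq> x)"

definition Min_set :: "('a::euclidean_space \<Rightarrow> 'a) \<Rightarrow> 'a set" where
  "Min_set u = {x. \<forall>d\<in>Mov u. norm (u x - x) \<le> norm d}"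

definition is_line :: "'a::euclidean_space set \<Rightarrow> bool" where
  "is_line L \<longleftrightarrow> affine L \<and> aff_dim L = 1"

end

theory Submission
  imports Defs
begin

text \<open>Write a Coxeter element as \<open>w = r\<^sub>j \<circ> r\<^sub>\<tau>\<close>, where \<open>r\<^sub>\<tau>\<close> is the product of the \<open>n\<close>
  reflections in the walls through the vertex \<open>p\<close> opposite to wall \<open>j\<close>. Their normals form a
  basis, so by Carter's lemma the linear part of \<open>r\<^sub>\<tau>\<close> fixes no nonzero vector, and composing it
  with the linear reflection along \<open>c\<^sub>j\<close> gives an orthogonal map \<open>L\<close> whose fixed space is a line
  \<open>\<real>y\<close> with \<open>y \<bullet> c\<^sub>j \<noteq> 0\<close>. For \<open>w x = L x + t\<close> the move-set is \<open>t + range (L - 1) =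
  {d. y \<bullet> d = y \<bullet> t}\<close>, a hyperplane missing \<open>0\<close> because \<open>p\<close> is moved off wall \<open>j\<close>, and the
  min-set is a coset of \<open>\<real>y\<close>.
  Conversely, the normals of any reflection factorization of \<open>w\<close> span \<open>Mov w\<close>, hence the whole
  space; with only \<open>n\<close> factors they would be independent, and Carter's lemma would forbid the
  fixed vector \<open>y\<close> of the linear part.\<close>

definition refl_hyperplane :: "'a::euclidean_space \<Rightarrow> real \<Rightarrow> 'a \<Rightarrow> 'a" where
  "refl_hyperplane c b x = x - (2 * (c \<bullet> x - b)) *\<^sub>R c"

lemma refl_hyperplane_linear_part:
  "refl_hyperplane c b x = refl_hyperplane c 0 x + (2 * b) *\<^sub>R c"
  by (simp add: refl_hyperplane_def algebra_simps)

lemma orthogonal_transformation_refl_hyperplane: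
  assumes "norm c = 1"
  shows "orthogonal_transformation (refl_hyperplane c 0)"
proof -
  have "c \<bullet> c = 1" using assms by (simp add: norm_eq_1)
  then show ?thesis
    by (auto simp: orthogonal_transformation_def refl_hyperplane_def linear_iff
        inner_commute algebra_simps)
qed

lemma refl_hyperplane_involution:
  assumes "norm c = 1"
  shows "refl_hyperplane c b (refl_hyperplane c b x) = x"
proof -
  have "c \<bullet> c = 1" using assms by (simp add: norm_eq_1)
  then show ?thesis by (simp add: refl_hyperplane_def algebra_simps)
qed

lemma closest_point_hyperplane:
  assumes "norm c = 1"
  shows "closest_point {x. c \<bullet> x = b} x = x - (c \<bullet> x - b) *\<^sub>R c"
proof (rule closest_point_unique[OF convex_hyperplane closed_hyperplane, symmetric])
  have cc: "c \<bullet> c = 1" using assms by (simp add: norm_eq_1)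
  let ?q = "x - (c \<bullet> x - b) *\<^sub>R c"
  show q: "?q \<in> {x. c \<bullet> x = b}" by (simp add: inner_diff_right cc)
  show "\<forall>z\<in>{x. c \<bullet> x = b}. dist x ?q \<le> dist x z"
  proof
    fix z assume z: "z \<in> {x. c \<bullet> x = b}"
    have "c \<bullet> (?q - z) = 0" using q z by (simp add: inner_diff_right)
    then have "(x - z) \<bullet> (x - z) = (x - ?q) \<bullet> (x - ?q) + (?q - z) \<bullet> (?q - z)"
      by (simp add: inner_commute cc algebra_simps)
    then have "(x - ?q) \<bullet> (x - ?q) \<le> (x - z) \<bullet> (x - z)"
      by (metis inner_ge_zero le_add_same_cancel1)
    then show "dist x ?q \<le> dist x z" unfolding dist_norm norm_le .
  qed
qed

lemma refl_in_hyperplane: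
  "norm c = 1 \<Longrightarrow> refl_in {x. c \<bullet> x = b} = refl_hyperplane c b"
  by (rule ext) (simp add: refl_in_def closest_point_hyperplane refl_hyperplane_def
      scaleR_2 algebra_simps)

lemma affine_hyperplane_normal_form:
  fixes H :: "'a::euclidean_space set"
  assumes "affine_hyperplane H"
  obtains c b where "norm c = 1" "H = {x. c \<bullet> x = b}"
proof -
  have "affine H" and dimH: "aff_dim H = int (DIM('a) - 1)"
    using assms DIM_positive[where 'a='a] by (auto simp: affine_hyperplane_def)
  then obtain a d where "a \<noteq> 0" "H = {x. a \<bullet> x = d}"
    using aff_dim_eq_hyperplane[of H] by (auto simp: hull_same)
  moreover have "a \<bullet> x = d \<longleftrightarrow> (a /\<^sub>R norm a) \<bullet> x = d / norm a" if "a \<noteq> 0" for x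
    using that by (simp add: field_simps)
  ultimately show ?thesis
    by (intro that[of "a /\<^sub>R norm a" "d / norm a"]) auto
qed

lemma affine_hyperplane_hyperplane:
  "c \<noteq> 0 \<Longrightarrow> affine_hyperplane {x. c \<bullet> x = b}"
  by (simp add: affine_hyperplane_def affine_hyperplane)

lemma span_affine_hyperplane_UNIV:
  fixes H :: "'a::euclidean_space set"
  assumes "affine_hyperplane H" "0 \<notin> H"
  shows "span H = UNIV"
proof -
  obtain c b where c: "norm c = 1" and H: "H = {x. c \<bullet> x = b}"
    using affine_hyperplane_normal_form[OF assms(1)] .
  have cc: "c \<bullet> c = 1" using c by (simp add: norm_eq_1)
  have b: "b \<noteq> 0" using assms(2) H by auto
  have "x \<in> span H" for x
  proof -
    have "b *\<^sub>R c \<in> H" "x + (b - c \<bullet> x) *\<^sub>R c \<in> H"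
      using cc by (auto simp: H inner_add_right)
    then have "x + (b - c \<bullet> x) *\<^sub>R c - ((b - c \<bullet> x) / b) *\<^sub>R (b *\<^sub>R c) \<in> span H"
      by (intro span_diff span_mul span_base)
    then show ?thesis using b by simp
  qed
  then show ?thesis by auto
qed

lemma is_reflection_refl_hyperplane:
  assumes "is_reflection r"
  obtains c b where "norm c = 1" "r = refl_hyperplane c b"
  using assms affine_hyperplane_normal_form refl_in_hyperplane
  unfolding is_reflection_def by metis

definition refl_prod :: "('a::euclidean_space \<times> real) list \<Rightarrow> 'a \<Rightarrow> 'a" where
  "refl_prod cbs = prod_maps (map (\<lambda>cb. refl_hyperplane (fst cb) (snd cb)) cbs)"

abbreviation linear_refls :: "('a::euclidean_space \<times> real) list \<Rightarrow> ('a \<times> real) list" where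
  "linear_refls cbs \<equiv> map (\<lambda>cb. (fst cb, 0)) cbs"

lemma refl_prod_Nil [simp]: "refl_prod [] = id"
  by (simp add: refl_prod_def prod_maps_def)

lemma refl_prod_Cons [simp]:
  "refl_prod (cb # cbs) = refl_hyperplane (fst cb) (snd cb) \<circ> refl_prod cbs"
  by (simp add: refl_prod_def prod_maps_def)

lemma refl_hyperplane_add:
  "refl_hyperplane c 0 (x + y) = refl_hyperplane c 0 x + refl_hyperplane c 0 y"
  by (simp add: refl_hyperplane_def inner_add_right scaleR_add_left)

lemma refl_prod_linear_part:
  "refl_prod cbs x = refl_prod (linear_refls cbs) x + refl_prod cbs 0"
proof (induction cbs arbitrary: x)
  case (Cons cb cbs)
  show ?case
    using Cons.IH[of x] by (simp add: refl_hyperplane_linear_part[of _ "snd cb"] refl_hyperplane_add)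
qed simp

lemma orthogonal_transformation_refl_prod:
  "\<forall>cb \<in> set cbs. norm (fst cb) = 1 \<Longrightarrow> orthogonal_transformation (refl_prod (linear_refls cbs))"
proof (induction cbs)
  case Nil
  then show ?case by (simp add: id_def)
next
  case (Cons cb cbs)
  then show ?case
    using orthogonal_transformation_compose[OF orthogonal_transformation_refl_hyperplane Cons.IH]
    by (simp add: comp_def)
qed

lemma refl_prod_move_in_span: "refl_prod cbs x - x \<in> span (fst ` set cbs)"
proof (induction cbs)
  case Nil
  then show ?case by (simp add: span_zero)
next
  case (Cons cb cbs)
  let ?y = "refl_prod cbs x"
  have "refl_prod (cb # cbs) x - x = (?y - x) - (2 * (fst cb \<bullet> ?y - snd cb)) *\<^sub>R fst cb"
    by (simp add: refl_hyperplane_def)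
  also have "\<dots> \<in> span (fst ` set (cb # cbs))"
    by (rule span_diff[OF _ span_mul[OF span_base]])
      (use Cons.IH span_mono[of "fst ` set cbs" "fst ` set (cb # cbs)"] in auto)
  finally show ?case .
qed

text \<open>Carter's lemma, affine version.\<close>
lemma refl_prod_fixed_point:
  assumes "distinct (map fst cbs)" "independent (fst ` set cbs)" "refl_prod cbs x = x"
  shows "\<forall>cb \<in> set cbs. fst cb \<bullet> x = snd cb"
  using assms
proof (induction cbs)
  case Nil
  then show ?case by simp
next
  case (Cons cb cbs)
  let ?c = "fst cb" and ?y = "refl_prod cbs x"
  have c_notin: "?c \<notin> span (fst ` set cbs)" and indep: "independent (fst ` set cbs)"
    using Cons.prems(1,2) by (auto simp: independent_insert)
  have move: "?y - x = (2 * (?c \<bullet> ?y - snd cb)) *\<^sub>R ?c"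
    using Cons.prems(3) by (simp add: refl_hyperplane_def algebra_simps)
  have on_wall: "?c \<bullet> ?y = snd cb"
  proof (rule ccontr)
    assume "?c \<bullet> ?y \<noteq> snd cb"
    then have "?c = inverse (2 * (?c \<bullet> ?y - snd cb)) *\<^sub>R (?y - x)"
      by (simp add: move)
    then have "?c \<in> span (fst ` set cbs)"
      by (metis refl_prod_move_in_span span_mul)
    with c_notin show False ..
  qed
  then have "?y = x" using move by simp
  with Cons.IH Cons.prems(1) indep on_wall show ?case by simp
qed

lemma refl_prod_linear_fixed_zero:
  assumes "distinct (map fst cbs)" "independent (fst ` set cbs)" "span (fst ` set cbs) = UNIV"
    and "refl_prod (linear_refls cbs) x = x"
  shows "x = 0"
proof -
  have "\<forall>cb \<in> set cbs. orthogonal x (fst cb)"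
    using refl_prod_fixed_point[of "linear_refls cbs" x] assms
    by (simp add: orthogonal_def inner_commute image_image comp_def)
  then have "orthogonal x x"
    using orthogonal_to_span[of x "fst ` set cbs" x] assms(3) by auto
  then show ?thesis by (simp add: orthogonal_def)
qed

lemma range_diff_id_orthogonal_transformation:
  fixes L :: "'a::euclidean_space \<Rightarrow> 'a"
  assumes L: "orthogonal_transformation L"
  shows "(\<exists>z. L z - z = d) \<longleftrightarrow> (\<forall>f. L f = f \<longrightarrow> f \<bullet> d = 0)"
proof
  assume "\<exists>z. L z - z = d"
  then obtain z where z: "L z - z = d" ..
  have "f \<bullet> d = 0" if "L f = f" for f
  proof -
    have "f \<bullet> L z = f \<bullet> z"
      using L that by (metis orthogonal_transformation_def)
    then show ?thesis by (simp add: z[symmetric] inner_diff_right)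
  qed
  then show "\<forall>f. L f = f \<longrightarrow> f \<bullet> d = 0" by blast
next
  assume fixed_perp: "\<forall>f. L f = f \<longrightarrow> f \<bullet> d = 0"
  let ?R = "range (\<lambda>z. L z - z)"
  have lin: "linear (\<lambda>z. L z - z)"
    using L by (simp add: orthogonal_transformation_linear linear_compose_sub linear_id[unfolded id_def])
  then have span_R: "span ?R = ?R"
    by (simp add: real_vector.linear_subspace_image)
  obtain s q where s: "s \<in> span ?R" and q: "\<And>x. x \<in> span ?R \<Longrightarrow> orthogonal q x"
    and d: "d = s + q"
    using orthogonal_subspace_decomp_exists[of ?R d] by blast
  have "q \<bullet> (L q - q) = 0"
    using q[of "L q - q"] by (simp add: span_base orthogonal_def)
  then have "(L q - q) \<bullet> (L q - q) = 0"
    using L by (simp add: orthogonal_transformation_def inner_diff_left inner_diff_right inner_commute)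
  then have "q \<bullet> d = 0"
    using fixed_perp by simp
  moreover have "q \<bullet> s = 0"
    using q[OF s] by (simp add: orthogonal_def)
  ultimately have "q = 0"
    by (simp add: d inner_add_right)
  then show "\<exists>z. L z - z = d"
    using s span_R d by auto
qed

lemma fixed_space_refl_comp_orthogonal_transformation:
  fixes L :: "'a::euclidean_space \<Rightarrow> 'a"
  assumes L: "orthogonal_transformation L" and no_fixed: "\<And>f. L f = f \<Longrightarrow> f = 0"
    and c: "norm c = 1"
  obtains y where "y \<bullet> c = - 1 / 2" "\<And>f. refl_hyperplane c 0 (L f) = f \<longleftrightarrow> f \<in> span {y}"
proof -
  have cc: "c \<bullet> c = 1" using c by (simp add: norm_eq_1)
  have lin: "linear (\<lambda>z. L z - z)"
    using L by (simp add: orthogonal_transformation_linear linear_compose_sub linear_id[unfolded id_def])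
  then have "inj (\<lambda>z. L z - z)"
    unfolding linear_injective_0[OF lin] by (auto intro: no_fixed)
  then obtain y where "c = L y - y"
    using surjD[OF linear_injective_imp_surjective[OF lin]] by blast
  then have Ly: "L y = y + c" by (simp add: algebra_simps)
  have "L y \<bullet> L y = y \<bullet> y"
    using L by (simp add: orthogonal_transformation_def)
  then have "(y + c) \<bullet> (y + c) = y \<bullet> y"
    by (simp add: Ly)
  then have yc: "y \<bullet> c = - 1 / 2"
    using cc by (simp add: inner_add_left inner_add_right inner_commute)
  let ?W = "\<lambda>f. refl_hyperplane c 0 (L f)"
  have W: "orthogonal_transformation ?W"
    using orthogonal_transformation_compose[OF orthogonal_transformation_refl_hyperplane[OF c] L]
    by (simp add: comp_def)
  have "2 * (c \<bullet> (y + c)) = 1"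
    using yc cc by (simp add: inner_add_right inner_commute)
  then have Wy: "?W y = y"
    by (simp add: Ly refl_hyperplane_def)
  have "f \<in> span {y}" if Wf: "?W f = f" for f
  proof -
    define g where "g = f + (2 * (c \<bullet> f)) *\<^sub>R y"
    have "?W g = g"
      using Wf Wy linear_add[OF orthogonal_transformation_linear[OF W]]
        orthogonal_transformation_scaleR[OF W] by (simp add: g_def)
    moreover have "c \<bullet> g = 0"
      using yc by (simp add: g_def inner_add_right inner_commute)
    ultimately have "L g = g"
      using refl_hyperplane_involution[OF c, of 0 "L g"] by (simp add: refl_hyperplane_def)
    then have "f = (- 2 * (c \<bullet> f)) *\<^sub>R y"
      using no_fixed[of g] by (simp add: g_def eq_neg_iff_add_eq_0)
    then show ?thesis
      by (metis span_base span_mul singletonI)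
  qed
  moreover have "?W f = f" if "f \<in> span {y}" for f
    using that Wy orthogonal_transformation_scaleR[OF W] by (auto simp: span_singleton)
  ultimately show ?thesis
    using that yc by blast
qed

lemma hyperbolic_iff_zero_notin_Mov: "hyperbolic u \<longleftrightarrow> 0 \<notin> Mov u"
  by (simp add: hyperbolic_def Mov_def)

lemma Mov_affine_orthogonal:
  fixes L :: "'a::euclidean_space \<Rightarrow> 'a"
  assumes L: "orthogonal_transformation L" and w: "\<And>x. w x = L x + t"
  shows "Mov w = {d. \<forall>f. L f = f \<longrightarrow> f \<bullet> d = f \<bullet> t}"
proof -
  have "d \<in> Mov w \<longleftrightarrow> (\<exists>z. L z - z = d - t)" for d
    by (simp add: Mov_def w algebra_simps)
  then show ?thesis
    by (auto simp: range_diff_id_orthogonal_transformation[OF L] inner_diff_right)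
qed

lemma Min_set_closest_point:
  assumes "closed (Mov u)" "convex (Mov u)"
  shows "Min_set u = {x. u x - x = closest_point (Mov u) 0}"
proof -
  have move: "u x - x \<in> Mov u" for x
    by (auto simp: Mov_def intro: exI[of _ x])
  have "x \<in> Min_set u \<longleftrightarrow> (\<forall>d \<in> Mov u. dist 0 (u x - x) \<le> dist 0 d)" for x
    by (simp add: Min_set_def)
  also have "\<dots> x \<longleftrightarrow> u x - x = closest_point (Mov u) 0" for x
    using closest_point_unique[OF assms(2,1) move] closest_point_le[OF assms(1)] by metis
  finally show ?thesis by blast
qed

lemma affine_orthogonal_one_dim_fixed_space:
  fixes L :: "'a::euclidean_space \<Rightarrow> 'a"
  assumes L: "orthogonal_transformation L" and fixed: "\<And>f. L f = f \<longleftrightarrow> f \<in> span {y}"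
    and w: "\<And>x. w x = L x + t"
  shows "Mov w = {d. y \<bullet> d = y \<bullet> t}" and "y \<noteq> 0 \<Longrightarrow> is_line (Min_set w)"
proof -
  have "(\<forall>f. L f = f \<longrightarrow> f \<bullet> d = f \<bullet> t) \<longleftrightarrow> y \<bullet> d = y \<bullet> t" for d
    unfolding fixed span_singleton using rangeI[of "\<lambda>k. k *\<^sub>R y" 1] by auto
  then show Mov: "Mov w = {d. y \<bullet> d = y \<bullet> t}"
    by (simp add: Mov_affine_orthogonal[OF L w])
  assume "y \<noteq> 0"
  define ds where "ds = closest_point (Mov w) 0"
  have "(y \<bullet> t / (y \<bullet> y)) *\<^sub>R y \<in> Mov w"
    using \<open>y \<noteq> 0\<close> by (simp add: Mov)
  then have "ds \<in> Mov w"
    unfolding ds_def Mov by (intro closest_point_in_set closed_hyperplane) auto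
  then obtain x0 where x0: "w x0 - x0 = ds"
    by (auto simp: Mov_def algebra_simps)
  have "w x - x - ds = L (x - x0) - (x - x0)" for x
    using x0 by (simp add: w linear_diff[OF orthogonal_transformation_linear[OF L]] algebra_simps)
  then have "w x - x = ds \<longleftrightarrow> L (x - x0) = x - x0" for x
    by (metis eq_iff_diff_eq_0)
  then have "w x - x = ds \<longleftrightarrow> x \<in> (+) x0 ` span {y}" for x
    by (force simp: fixed image_iff intro: bexI[where x = "x - x0"])
  moreover have "Min_set w = {x. w x - x = ds}"
    by (simp add: ds_def Min_set_closest_point Mov closed_hyperplane convex_hyperplane)
  ultimately have "Min_set w = (+) x0 ` span {y}"
    by blast
  then show "is_line (Min_set w)"
    using \<open>y \<noteq> 0\<close>
    by (simp add: is_line_def affine_translation[symmetric] subspace_imp_affine aff_dim_translation_eq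
        aff_dim_subspace)
qed

lemma reflections_refl_prod:
  assumes "\<forall>r \<in> set rs. is_reflection r"
  obtains cbs where "prod_maps rs = refl_prod cbs" "length cbs = length rs"
  using assms
proof (induction rs arbitrary: thesis)
  case Nil
  then show ?case
    using Nil.prems(1)[of "[]"] by (simp add: prod_maps_def)
next
  case (Cons r rs)
  then obtain cbs where "prod_maps rs = refl_prod cbs" "length cbs = length rs"
    by auto
  moreover have "is_reflection r"
    using Cons.prems(2) by simp
  then obtain c b where "r = refl_hyperplane c b"
    using is_reflection_refl_hyperplane by metis
  ultimately show ?case
    using Cons.prems(1)[of "(c, b) # cbs"] by (simp add: prod_maps_def)
qed

lemma reflection_length_lower_bound:
  fixes w :: "'a::euclidean_space \<Rightarrow> 'a"
  assumes rs: "\<forall>r \<in> set rs. is_reflection r" "prod_maps rs = w"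
    and Mov: "affine_hyperplane (Mov w)" "0 \<notin> Mov w"
    and y: "w y - w 0 = y" "y \<noteq> 0"
  shows "DIM('a) < length rs"
proof -
  obtain cbs where w: "w = refl_prod cbs" and len: "length cbs = length rs"
    using reflections_refl_prod[OF rs(1)] rs(2) by metis
  let ?N = "fst ` set cbs"
  have "Mov w \<subseteq> span ?N"
    using refl_prod_move_in_span[of cbs] by (auto simp: Mov_def w) (metis add_diff_cancel_left')
  then have spanning: "span ?N = UNIV"
    using span_affine_hyperplane_UNIV[OF Mov] span_mono[of "Mov w" "span ?N"] by (simp add: span_span top_unique)
  then have "DIM('a) \<le> card ?N"
    using dim_le_card[of UNIV ?N] by simp
  also have card_le: "card ?N \<le> length cbs"
    by (metis card_image_le card_length finite_set le_trans)
  finally have "DIM('a) \<le> length cbs" .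
  moreover have "length cbs \<noteq> DIM('a)"
  proof
    assume "length cbs = DIM('a)"
    then have card: "card ?N = DIM('a)"
      using \<open>DIM('a) \<le> card ?N\<close> card_le by linarith
    then have "independent ?N"
      using card_le_dim_spanning[of ?N UNIV] spanning by simp
    moreover have "distinct (map fst cbs)"
      using card \<open>length cbs = DIM('a)\<close> by (intro card_distinct) simp
    moreover have "refl_prod (linear_refls cbs) y = y"
      using y(1) refl_prod_linear_part[of cbs y] by (simp add: w)
    ultimately show False
      using refl_prod_linear_fixed_zero spanning y(2) by blast
  qed
  ultimately show ?thesis
    using len by simp
qed

lemma facet_hyperplane_simplex:
  fixes v :: "nat \<Rightarrow> 'a::euclidean_space"
  assumes v: "is_simplex v" and i: "i \<le> DIM('a)"
  shows "affine_hyperplane (facet_hyperplane v i)"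
    and "k \<le> DIM('a) \<Longrightarrow> v k \<in> facet_hyperplane v i \<longleftrightarrow> k \<noteq> i"
proof -
  let ?I = "{..DIM('a)}"
  have inj: "inj_on v ?I" and indep: "\<not> affine_dependent (v ` ?I)"
    using v by (auto simp: is_simplex_def)
  have hull: "facet_hyperplane v i = affine hull (v ` (?I - {i}))"
    by (simp add: facet_hyperplane_def facet_def)
  have "card (v ` (?I - {i})) = DIM('a)"
    using i card_image[OF inj_on_subset[OF inj, of "?I - {i}"]] by auto
  moreover have "\<not> affine_dependent (v ` (?I - {i}))"
    using indep by (rule affine_independent_subset) auto
  ultimately have "aff_dim (facet_hyperplane v i) = int DIM('a) - 1"
    using aff_dim_affine_independent[of "v ` (?I - {i})"] by (simp add: hull)
  then show "affine_hyperplane (facet_hyperplane v i)"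
    by (simp add: affine_hyperplane_def hull)
  assume k: "k \<le> DIM('a)"
  have "v i \<notin> affine hull (v ` ?I - {v i})"
    using indep i unfolding affine_dependent_def by auto
  moreover have "v ` ?I - {v i} = v ` (?I - {i})"
    using inj i by (auto simp: inj_on_def)
  ultimately show "v k \<in> facet_hyperplane v i \<longleftrightarrow> k \<noteq> i"
    using k by (auto simp: hull intro: hull_inc)
qed

lemma affine_orthogonal_image_hyperplane:
  fixes G :: "'a::euclidean_space \<Rightarrow> 'a"
  assumes G: "orthogonal_transformation G"
  shows "(\<lambda>x. G x + t) ` {x. c \<bullet> x = b} = {x. G c \<bullet> x = b + G c \<bullet> t}"
proof -
  have inner: "G c \<bullet> (G z + t) = c \<bullet> z + G c \<bullet> t" for z
    using G by (simp add: orthogonal_transformation_def inner_add_right)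
  have "x \<in> (\<lambda>x. G x + t) ` {x. c \<bullet> x = b}" if "G c \<bullet> x = b + G c \<bullet> t" for x
  proof -
    obtain z where z: "G z = x - t"
      using orthogonal_transformation_surj[OF G] by (metis surjD)
    then have "c \<bullet> z = b"
      using that inner[of z] by simp
    with z show ?thesis
      by (auto intro: image_eqI[of _ _ z])
  qed
  then show ?thesis
    using inner by auto
qed

lemma refl_group_affine_orthogonal:
  fixes v :: "nat \<Rightarrow> 'a::euclidean_space"
  assumes v: "is_simplex v" and "g \<in> refl_group v"
  obtains G t where "orthogonal_transformation G" "g = (\<lambda>x. G x + t)"
  using assms(2)
proof (induction arbitrary: thesis rule: refl_group.induct)
  case id_in
  then show ?case
    using orthogonal_transformation_id by fastforce
next
  case (step i g)
  obtain G t where G: "orthogonal_transformation G" and g: "g = (\<lambda>x. G x + t)"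
    using step.IH by blast
  obtain c b where c: "norm c = 1" and r: "refl_in (facet_hyperplane v i) = refl_hyperplane c b"
    using affine_hyperplane_normal_form[OF facet_hyperplane_simplex(1)[OF v step.hyps(1)]]
    by (metis refl_in_hyperplane)
  let ?G = "refl_hyperplane c 0 \<circ> G"
  have "refl_in (facet_hyperplane v i) \<circ> g = (\<lambda>x. ?G x + (refl_hyperplane c 0 t + (2 * b) *\<^sub>R c))"
    by (auto simp: r g refl_hyperplane_linear_part[of c b] refl_hyperplane_add)
  moreover have "orthogonal_transformation ?G"
    by (rule orthogonal_transformation_compose[OF orthogonal_transformation_refl_hyperplane[OF c] G])
  ultimately show ?case
    using step.prems by blast
qed

lemma chamber_walls:
  fixes v :: "nat \<Rightarrow> 'a::euclidean_space"
  assumes v: "is_simplex v" and g: "g \<in> refl_group v"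
  obtains c b where "\<And>i. i \<le> DIM('a) \<Longrightarrow> norm (c i) = 1"
    "\<And>i. i \<le> DIM('a) \<Longrightarrow> simple_refl v g i = refl_hyperplane (c i) (b i)"
    "\<And>i k. i \<le> DIM('a) \<Longrightarrow> k \<le> DIM('a) \<Longrightarrow> c i \<bullet> g (v k) = b i \<longleftrightarrow> k \<noteq> i"
proof -
  obtain G t where G: "orthogonal_transformation G" and g_eq: "g = (\<lambda>x. G x + t)"
    using refl_group_affine_orthogonal[OF v g] .
  have "\<exists>cb. norm (fst cb) = 1 \<and> simple_refl v g i = refl_hyperplane (fst cb) (snd cb)
      \<and> (\<forall>k \<le> DIM('a). fst cb \<bullet> g (v k) = snd cb \<longleftrightarrow> k \<noteq> i)" if i: "i \<le> DIM('a)" for i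
  proof -
    obtain c b where c: "norm c = 1" and H: "facet_hyperplane v i = {x. c \<bullet> x = b}"
      using affine_hyperplane_normal_form[OF facet_hyperplane_simplex(1)[OF v i]] .
    have "g ` facet v i = (\<lambda>x. t + x) ` G ` facet v i"
      by (simp add: g_eq image_image add.commute)
    then have "affine hull (g ` facet v i) = (\<lambda>x. t + x) ` G ` (affine hull (facet v i))"
      using affine_hull_linear_image[of G "facet v i"] orthogonal_transformation_linear[OF G]
      by (simp add: affine_hull_translation linear_conv_bounded_linear)
    also have "\<dots> = g ` facet_hyperplane v i"
      by (simp add: g_eq facet_hyperplane_def image_image add.commute)
    also have "\<dots> = {x. G c \<bullet> x = b + G c \<bullet> t}"
      by (simp add: H g_eq affine_orthogonal_image_hyperplane[OF G])
    finally have "simple_refl v g i = refl_hyperplane (G c) (b + G c \<bullet> t)"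
      using c G by (simp add: simple_refl_def refl_in_hyperplane orthogonal_transformation_norm)
    moreover have "G c \<bullet> g (v k) = b + G c \<bullet> t \<longleftrightarrow> c \<bullet> v k = b" for k
      using G by (simp add: g_eq orthogonal_transformation_def inner_add_right)
    ultimately show ?thesis
      using facet_hyperplane_simplex(2)[OF v i] c G
      by (intro exI[of _ "(G c, b + G c \<bullet> t)"]) (auto simp: H orthogonal_transformation_norm)
  qed
  then obtain cb where "\<And>i. i \<le> DIM('a) \<Longrightarrow> norm (fst (cb i)) = 1 \<and>
      simple_refl v g i = refl_hyperplane (fst (cb i)) (snd (cb i)) \<and>
      (\<forall>k \<le> DIM('a). fst (cb i) \<bullet> g (v k) = snd (cb i) \<longleftrightarrow> k \<noteq> i)"
    by metis
  then show ?thesis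
    using that[of "\<lambda>i. fst (cb i)" "\<lambda>i. snd (cb i)"] by blast
qed

lemma refl_prod_common_point:
  "\<forall>cb \<in> set cbs. fst cb \<bullet> p = snd cb \<Longrightarrow> refl_prod cbs p = p"
  by (induction cbs) (simp_all add: refl_hyperplane_def)

lemma biorthogonal_independent:
  fixes c e :: "nat \<Rightarrow> 'a::euclidean_space"
  assumes J: "finite J"
    and off_diag: "\<And>i k. i \<in> J \<Longrightarrow> k \<in> J \<Longrightarrow> i \<noteq> k \<Longrightarrow> c i \<bullet> e k = 0"
    and diag: "\<And>k. k \<in> J \<Longrightarrow> c k \<bullet> e k \<noteq> 0"
  shows "inj_on c J" and "independent (c ` J)"
proof -
  show inj: "inj_on c J"
    by (rule inj_onI) (metis diag off_diag)
  show "independent (c ` J)"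
  proof
    assume "dependent (c ` J)"
    then obtain a where a: "\<exists>x \<in> c ` J. a x \<noteq> 0" "(\<Sum>x \<in> c ` J. a x *\<^sub>R x) = 0"
      using dependent_finite[of "c ` J"] J by auto
    then obtain k where k: "k \<in> J" "a (c k) \<noteq> 0" by auto
    have "0 = (\<Sum>i \<in> J. a (c i) *\<^sub>R c i) \<bullet> e k"
      using a(2) by (simp add: sum.reindex[OF inj])
    also have "\<dots> = (\<Sum>i \<in> J. a (c i) * (c i \<bullet> e k))"
      by (simp add: inner_sum_left)
    also have "\<dots> = a (c k) * (c k \<bullet> e k)"
      using off_diag k(1) by (subst sum.remove[OF J k(1)]) (auto intro!: sum.neutral)
    finally show False
      using k diag by simp
  qed
qed

lemma simplex_walls_normals_basis:
  fixes c :: "nat \<Rightarrow> 'a::euclidean_space"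
  assumes walls: "\<And>i k. i \<le> DIM('a) \<Longrightarrow> k \<le> DIM('a) \<Longrightarrow> c i \<bullet> u k = b i \<longleftrightarrow> k \<noteq> i"
    and j: "j \<le> DIM('a)"
  defines "J \<equiv> {..DIM('a)} - {j}"
  shows "inj_on c J" and "independent (c ` J)" and "span (c ` J) = UNIV"
proof -
  have "finite J" by (simp add: J_def)
  moreover have "c i \<bullet> (u k - u j) = 0" if "i \<in> J" "k \<in> J" "i \<noteq> k" for i k
    using that j walls[of i k] walls[of i j] by (auto simp: J_def inner_diff_right)
  moreover have "c k \<bullet> (u k - u j) \<noteq> 0" if "k \<in> J" for k
    using that j walls[of k k] walls[of k j] by (auto simp: J_def inner_diff_right)
  ultimately show inj: "inj_on c J" and indep: "independent (c ` J)"
    using biorthogonal_independent[of J c "\<lambda>k. u k - u j"] by auto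
  have "card (c ` J) = dim (UNIV :: 'a set)"
    using card_image[OF inj] j by (simp add: J_def)
  then show "span (c ` J) = UNIV"
    using card_eq_dim[of "c ` J" UNIV] indep \<open>finite J\<close> by auto
qed

lemma walls_through_vertex_fixed_line:
  fixes c u :: "nat \<Rightarrow> 'a::euclidean_space"
  assumes unit: "\<And>i. i \<le> DIM('a) \<Longrightarrow> norm (c i) = 1"
    and walls: "\<And>i k. i \<le> DIM('a) \<Longrightarrow> k \<le> DIM('a) \<Longrightarrow> c i \<bullet> u k = b i \<longleftrightarrow> k \<noteq> i"
    and j: "j \<le> DIM('a)" and \<tau>: "distinct \<tau>" "set \<tau> = {..DIM('a)} - {j}"
  defines "L \<equiv> refl_prod (linear_refls (map (\<lambda>i. (c i, b i)) \<tau>))"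
  obtains y where "orthogonal_transformation L" "y \<bullet> c j = - 1 / 2"
    "\<And>f. refl_hyperplane (c j) 0 (L f) = f \<longleftrightarrow> f \<in> span {y}"
proof -
  define cbs where "cbs = map (\<lambda>i. (c i, b i)) \<tau>"
  have L_cbs: "L = refl_prod (linear_refls cbs)"
    by (simp add: L_def cbs_def)
  have normals: "fst ` set cbs = c ` ({..DIM('a)} - {j})"
    by (force simp: cbs_def \<tau>(2))
  have "distinct (map fst cbs)"
    using simplex_walls_normals_basis(1)[OF walls j] \<tau> by (simp add: cbs_def distinct_map comp_def)
  then have no_fixed: "L f = f \<Longrightarrow> f = 0" for f
    using refl_prod_linear_fixed_zero[of cbs f] simplex_walls_normals_basis(2,3)[OF walls j]
    by (simp add: normals L_cbs)
  have "orthogonal_transformation L"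
    using unit \<tau>(2) unfolding L_def by (intro orthogonal_transformation_refl_prod) auto
  then show ?thesis
    using fixed_space_refl_comp_orthogonal_transformation[OF _ no_fixed unit[OF j]] that by blast
qed

lemma product_of_simplex_walls:
  fixes c u :: "nat \<Rightarrow> 'a::euclidean_space"
  assumes unit: "\<And>i. i \<le> DIM('a) \<Longrightarrow> norm (c i) = 1"
    and walls: "\<And>i k. i \<le> DIM('a) \<Longrightarrow> k \<le> DIM('a) \<Longrightarrow> c i \<bullet> u k = b i \<longleftrightarrow> k \<noteq> i"
    and \<sigma>: "distinct \<sigma>" "set \<sigma> = {..DIM('a)}"
    and w: "w = refl_prod (map (\<lambda>i. (c i, b i)) \<sigma>)"
  shows "hyperbolic w \<and> (affine_hyperplane (Mov w) \<and> 0 \<notin> Mov w) \<and> is_line (Min_set w)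
    \<and> (\<forall>rs. (\<forall>r \<in> set rs. is_reflection r) \<and> prod_maps rs = w \<longrightarrow> length \<sigma> \<le> length rs)"
proof -
  obtain j \<tau> where \<sigma>_eq: "\<sigma> = j # \<tau>"
    using \<sigma>(2) by (cases \<sigma>) auto
  have j: "j \<le> DIM('a)" and \<tau>: "distinct \<tau>" "set \<tau> = {..DIM('a)} - {j}"
    using \<sigma> by (auto simp: \<sigma>_eq)
  define cbs where "cbs = map (\<lambda>i. (c i, b i)) \<tau>"
  obtain y where orth: "orthogonal_transformation (refl_prod (linear_refls cbs))"
    and yc: "y \<bullet> c j = - 1 / 2"
    and fixed: "\<And>f. refl_hyperplane (c j) 0 (refl_prod (linear_refls cbs) f) = f \<longleftrightarrow> f \<in> span {y}"
    using walls_through_vertex_fixed_line[OF unit walls j \<tau>] unfolding cbs_def by blast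
  let ?L = "\<lambda>x. refl_hyperplane (c j) 0 (refl_prod (linear_refls cbs) x)"
  have L: "orthogonal_transformation ?L"
    using orthogonal_transformation_compose[OF orthogonal_transformation_refl_hyperplane[OF unit[OF j]] orth]
    by (simp add: comp_def)
  have w_affine: "w x = ?L x + w 0" for x
    using refl_prod_linear_part[of "(c j, b j) # cbs" x] by (simp add: w \<sigma>_eq cbs_def comp_def)
  define h where "h = c j \<bullet> u j - b j"
  have "h \<noteq> 0"
    using walls[OF j j] by (simp add: h_def)
  have "refl_prod cbs (u j) = u j"
    using walls j \<tau>(2) by (intro refl_prod_common_point) (auto simp: cbs_def)
  then have "w (u j) = u j - (2 * h) *\<^sub>R c j"
    by (simp add: w \<sigma>_eq cbs_def[symmetric] refl_hyperplane_def h_def)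
  moreover have "y \<bullet> ?L (u j) = y \<bullet> u j"
  proof -
    have "y \<bullet> ?L (u j) = ?L y \<bullet> ?L (u j)"
      using fixed[of y] by (simp add: span_base)
    also have "\<dots> = y \<bullet> u j"
      using L unfolding orthogonal_transformation_def by blast
    finally show ?thesis .
  qed
  ultimately have "y \<bullet> w 0 = h"
    using w_affine[of "u j"] yc by (simp add: eq_diff_eq[symmetric] inner_diff_right)
  then have Mov: "Mov w = {d. y \<bullet> d = h}" and "y \<noteq> 0"
    using affine_orthogonal_one_dim_fixed_space(1)[OF L fixed w_affine] \<open>h \<noteq> 0\<close> by auto
  have "length \<sigma> = DIM('a) + 1"
    using distinct_card[OF \<sigma>(1)] \<sigma>(2) by simp
  then have "length \<sigma> \<le> length rs" if "\<forall>r \<in> set rs. is_reflection r" "prod_maps rs = w" for rs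
    using reflection_length_lower_bound[OF that, of y] w_affine[of y] fixed[of y] \<open>y \<noteq> 0\<close> \<open>h \<noteq> 0\<close>
    by (simp add: Mov affine_hyperplane_hyperplane span_base)
  then show ?thesis
    using affine_orthogonal_one_dim_fixed_space(2)[OF L fixed w_affine \<open>y \<noteq> 0\<close>] \<open>y \<noteq> 0\<close> \<open>h \<noteq> 0\<close>
    by (auto simp: hyperbolic_iff_zero_notin_Mov Mov affine_hyperplane_hyperplane)
qed

lemma simple_factorization_properties:
  fixes v :: "nat \<Rightarrow> 'a::euclidean_space"
  assumes v: "is_simplex v" and "simple_factorization v w g \<sigma>"
  shows "hyperbolic w \<and> (affine_hyperplane (Mov w) \<and> 0 \<notin> Mov w) \<and> is_line (Min_set w)
    \<and> (\<forall>rs. (\<forall>r \<in> set rs. is_reflection r) \<and> prod_maps rs = w \<longrightarrow> length \<sigma> \<le> length rs)"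
proof -
  have g: "g \<in> refl_group v" and \<sigma>: "distinct \<sigma>" "set \<sigma> = {..DIM('a)}"
    and w: "w = prod_maps (map (simple_refl v g) \<sigma>)"
    using assms(2) by (auto simp: simple_factorization_def)
  obtain c b where unit: "\<And>i. i \<le> DIM('a) \<Longrightarrow> norm (c i) = 1"
    and reflections: "\<And>i. i \<le> DIM('a) \<Longrightarrow> simple_refl v g i = refl_hyperplane (c i) (b i)"
    and walls: "\<And>i k. i \<le> DIM('a) \<Longrightarrow> k \<le> DIM('a) \<Longrightarrow> c i \<bullet> g (v k) = b i \<longleftrightarrow> k \<noteq> i"
    using chamber_walls[OF v g] by metis
  have walls_refl: "map (simple_refl v g) \<sigma> = map (\<lambda>i. refl_hyperplane (c i) (b i)) \<sigma>"
    by (rule map_cong[OF refl]) (use reflections \<sigma>(2) in auto)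
  have "w = refl_prod (map (\<lambda>i. (c i, b i)) \<sigma>)"
    unfolding w refl_prod_def by (simp only: map_map comp_def fst_conv snd_conv walls_refl)
  then show ?thesis
    using product_of_simplex_walls[OF unit walls \<sigma>] by blast
qed

theorem proposition7p2:
  fixes v :: "nat \<Rightarrow> 'a::euclidean_space" and w :: "'a \<Rightarrow> 'a"
  assumes "is_simplex v"
    and "angles_submultiples_of_pi v"
    and "acts_properly (refl_group v)"
    and "acts_cocompactly (refl_group v)"
    and "coxeter_element v w"
  shows "hyperbolic w
    \<and> (affine_hyperplane (Mov w) \<and> 0 \<notin> Mov w)
    \<and> is_line (Min_set w)
    \<and> (\<forall>g \<sigma>. simple_factorization v w g \<sigma> \<longrightarrow>
         (\<forall>rs. (\<forall>r\<in>set rs. is_reflection r) \<and> prod_maps rs = w \<longrightarrow> length \<sigma> \<le> length rs))"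
proof -
  obtain g \<sigma> where "simple_factorization v w g \<sigma>"
    using assms(5) by (auto simp: coxeter_element_def)
  then show ?thesis
    using simple_factorization_properties[OF assms(1)] by blast
qed

end
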